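(* Let $g:[a,b]\to\mathbb R$ be increasing and left-continuous at every point of $(a,b)$, and let $f:[a,b]\to\mathbb R$ be $g$-Lipschitz continuous with Lipschitz constant $H$. Then $f^B$ is $g^B$-Lipschitz continuous with Lipschitz constant $H$. Furthermore, if $f$ is increasing, then $f^C$ is $g^C$-Lipschitz continuous with Lipschitz constant $H$.
   Context: For a function $\varphi:[a,b]\to\mathbb R$ having right limits, $\Delta^+\varphi(t)=\varphi(t^+)-\varphi(t)$, its jump part is $\varphi^B(t)=\sum_{s\in[a,t)}\Delta^+\varphi(s)$ and its continuous part is $\varphi^C=\varphi-\varphi^B$ (applied to both $f$ and $g$). For functions $u,v$ on $[a,b]$, $u$ is $v$-Lipschitz continuous with constant $H$ if $|u(t)-u(s)|\le H|v(t)-v(s)|$ for all $t,s\in[a,b]$. *)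

theory Defs
  imports "HOL-Analysis.Analysis"
begin

definition right_lim :: "real \<Rightarrow> (real \<Rightarrow> real) \<Rightarrow> real \<Rightarrow> real" where
  "right_lim b \<phi> t = Lim (at t within {t<..b}) \<phi>"

definition right_jump :: "real \<Rightarrow> (real \<Rightarrow> real) \<Rightarrow> real \<Rightarrow> real" where
  "right_jump b \<phi> t = right_lim b \<phi> t - \<phi> t"

definition jump_part :: "real \<Rightarrow> real \<Rightarrow> (real \<Rightarrow> real) \<Rightarrow> real \<Rightarrow> real" where
  "jump_part a b \<phi> t = infsum (right_jump b \<phi>) {a..<t}"

definition cont_part :: "real \<Rightarrow> real \<Rightarrow> (real \<Rightarrow> real) \<Rightarrow> real \<Rightarrow> real" where
  "cont_part a b \<phi> t = \<phi> t - jump_part a b \<phi> t"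

definition rel_lipschitz :: "real \<Rightarrow> real \<Rightarrow> (real \<Rightarrow> real) \<Rightarrow> (real \<Rightarrow> real) \<Rightarrow> real \<Rightarrow> bool" where
  "rel_lipschitz a b u v H \<longleftrightarrow>
     (\<forall>t\<in>{a..b}. \<forall>s\<in>{a..b}. \<bar>u t - u s\<bar> \<le> H * \<bar>v t - v s\<bar>)"

end

theory Submission imports Defs begin

text \<open>
  For increasing \<open>g\<close>, \<open>f\<close> is \<open>g\<close>-Lipschitz with constant \<open>H\<close> exactly when both
  \<open>H g - f\<close> and \<open>H g + f\<close> are increasing. Monotone functions have right limits and absolutely
  summable right jumps, so on them the jump part and the continuous part are linear operators, and
  both preserve monotonicity. Writing \<open>f\<close> and \<open>H g\<close> as combinations of the two increasing
  functions \<open>H g \<mp> f\<close> therefore transfers the Lipschitz condition to both parts. In particular the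
  conclusion about continuous parts holds without assuming \<open>f\<close> increasing, and the left continuity
  of \<open>g\<close> is not needed.
\<close>

lemma right_lim_mono_on:
  fixes \<phi> :: "real \<Rightarrow> real"
  assumes mono: "mono_on {a..b} \<phi>" and "a \<le> m" "m < b"
  shows "right_lim b \<phi> m = Inf (\<phi> ` {m<..b})"
    and "(\<phi> \<longlongrightarrow> right_lim b \<phi> m) (at m within {m<..b})"
proof -
  have "{m<..} \<inter> {m<..b} = {m<..b}" by auto
  then have lim: "(\<phi> \<longlongrightarrow> Inf (\<phi> ` {m<..b})) (at m within {m<..b})"
    using Lim_right_bound[of "{m<..b}" m \<phi> "\<phi> m"] mono assms by (auto simp: mono_on_def)
  have "at m within {m<..b} \<noteq> bot"
    using \<open>m < b\<close> by (simp add: at_within_eq_bot_iff)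
  from this lim show eq: "right_lim b \<phi> m = Inf (\<phi> ` {m<..b})"
    unfolding right_lim_def by (rule tendsto_Lim)
  show "(\<phi> \<longlongrightarrow> right_lim b \<phi> m) (at m within {m<..b})"
    using lim eq by simp
qed

lemma right_lim_le_mono_on:
  fixes \<phi> :: "real \<Rightarrow> real"
  assumes mono: "mono_on {a..b} \<phi>" and "a \<le> m" "m < y" "y \<le> b"
  shows "right_lim b \<phi> m \<le> \<phi> y"
proof -
  have "bdd_below (\<phi> ` {m<..b})"
    using mono assms by (auto simp: mono_on_def bdd_below_def intro!: exI[of _ "\<phi> m"])
  then show ?thesis
    using right_lim_mono_on(1)[OF mono] assms by (auto intro!: cInf_lower)
qed

lemma right_jump_nonneg_mono_on:
  fixes \<phi> :: "real \<Rightarrow> real"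
  assumes mono: "mono_on {a..b} \<phi>" and "m \<in> {a..<b}"
  shows "0 \<le> right_jump b \<phi> m"
proof -
  have "\<phi> m \<le> Inf (\<phi> ` {m<..b})"
    using mono assms by (auto simp: mono_on_def intro!: cInf_greatest)
  then show ?thesis
    using right_lim_mono_on(1)[OF mono] assms by (simp add: right_jump_def)
qed

lemma sum_right_jump_le_mono_on:
  fixes \<phi> :: "real \<Rightarrow> real"
  assumes mono: "mono_on {a..b} \<phi>" and "finite F"
    and "F \<subseteq> {s..<t}" "a \<le> s" "s \<le> t" "t \<le> b"
  shows "sum (right_jump b \<phi>) F \<le> \<phi> t - \<phi> s"
  using assms(2-)
proof (induction F arbitrary: t rule: finite_linorder_max_induct)
  case empty
  then show ?case using mono by (auto simp: mono_on_def)
next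
  case (insert m F)
  have "sum (right_jump b \<phi>) F \<le> \<phi> m - \<phi> s"
    using insert by (intro insert.IH) auto
  moreover have "right_lim b \<phi> m \<le> \<phi> t"
    using insert by (intro right_lim_le_mono_on[OF mono]) auto
  moreover have "m \<notin> F" using insert by auto
  ultimately show ?case
    using insert by (simp add: right_jump_def)
qed

lemma right_jump_summable_on_mono_on:
  fixes \<phi> :: "real \<Rightarrow> real"
  assumes mono: "mono_on {a..b} \<phi>" and "a \<le> b"
  shows "right_jump b \<phi> summable_on {a..<b}"
proof (rule nonneg_bdd_above_summable_on)
  show "\<And>x. x \<in> {a..<b} \<Longrightarrow> 0 \<le> right_jump b \<phi> x"
    using right_jump_nonneg_mono_on[OF mono] by auto
  show "bdd_above (sum (right_jump b \<phi>) ` {F. F \<subseteq> {a..<b} \<and> finite F})"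
    using sum_right_jump_le_mono_on[OF mono] \<open>a \<le> b\<close>
    by (auto simp: bdd_above_def intro!: exI[of _ "\<phi> b - \<phi> a"])
qed

lemma infsum_right_jump_le_mono_on:
  fixes \<phi> :: "real \<Rightarrow> real"
  assumes mono: "mono_on {a..b} \<phi>" and "a \<le> s" "s \<le> t" "t \<le> b"
  shows "infsum (right_jump b \<phi>) {s..<t} \<le> \<phi> t - \<phi> s"
proof (rule infsum_le_finite_sums)
  show "right_jump b \<phi> summable_on {s..<t}"
    using assms by (intro summable_on_subset[OF right_jump_summable_on_mono_on[OF mono]]) auto
  show "\<And>F. finite F \<Longrightarrow> F \<subseteq> {s..<t} \<Longrightarrow> sum (right_jump b \<phi>) F \<le> \<phi> t - \<phi> s"
    using sum_right_jump_le_mono_on[OF mono] assms by blast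
qed

lemma jump_part_diff:
  fixes \<phi> :: "real \<Rightarrow> real"
  assumes summable: "right_jump b \<phi> summable_on {a..<b}" and "a \<le> s" "s \<le> t" "t \<le> b"
  shows "jump_part a b \<phi> t - jump_part a b \<phi> s = infsum (right_jump b \<phi>) {s..<t}"
proof -
  have "{a..<t} = {a..<s} \<union> {s..<t}" using assms by auto
  moreover have "infsum (right_jump b \<phi>) ({a..<s} \<union> {s..<t})
      = infsum (right_jump b \<phi>) {a..<s} + infsum (right_jump b \<phi>) {s..<t}"
    using assms by (intro infsum_Un_disjoint summable_on_subset[OF summable]) auto
  ultimately show ?thesis by (simp add: jump_part_def)
qed

lemma mono_on_jump_part:
  fixes \<phi> :: "real \<Rightarrow> real"
  assumes mono: "mono_on {a..b} \<phi>"
  shows "mono_on {a..b} (jump_part a b \<phi>)"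
proof (rule mono_onI)
  fix s t assume "s \<in> {a..b}" "t \<in> {a..b}" "s \<le> t"
  then show "jump_part a b \<phi> s \<le> jump_part a b \<phi> t"
    using jump_part_diff[OF right_jump_summable_on_mono_on[OF mono], of s t]
      infsum_nonneg[of "{s..<t}" "right_jump b \<phi>"] right_jump_nonneg_mono_on[OF mono]
    by auto
qed

lemma mono_on_cont_part:
  fixes \<phi> :: "real \<Rightarrow> real"
  assumes mono: "mono_on {a..b} \<phi>"
  shows "mono_on {a..b} (cont_part a b \<phi>)"
proof (rule mono_onI)
  fix s t assume "s \<in> {a..b}" "t \<in> {a..b}" "s \<le> t"
  then show "cont_part a b \<phi> s \<le> cont_part a b \<phi> t"
    using jump_part_diff[OF right_jump_summable_on_mono_on[OF mono], of s t]
      infsum_right_jump_le_mono_on[OF mono, of s t]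
    by (auto simp: cont_part_def)
qed

lemma right_jump_linear_combination:
  fixes \<phi> \<psi> :: "real \<Rightarrow> real"
  assumes "m < b"
    and "(\<phi> \<longlongrightarrow> right_lim b \<phi> m) (at m within {m<..b})"
    and "(\<psi> \<longlongrightarrow> right_lim b \<psi> m) (at m within {m<..b})"
  shows "right_jump b (\<lambda>x. c * \<phi> x + d * \<psi> x) m = c * right_jump b \<phi> m + d * right_jump b \<psi> m"
proof -
  have "((\<lambda>x. c * \<phi> x + d * \<psi> x) \<longlongrightarrow> c * right_lim b \<phi> m + d * right_lim b \<psi> m)
      (at m within {m<..b})"
    using assms by (intro tendsto_intros)
  with \<open>m < b\<close> have "right_lim b (\<lambda>x. c * \<phi> x + d * \<psi> x) m = c * right_lim b \<phi> m + d * right_lim b \<psi> m"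
    unfolding right_lim_def by (intro tendsto_Lim) (simp_all add: at_within_eq_bot_iff)
  then show ?thesis by (simp add: right_jump_def algebra_simps)
qed

lemma jump_part_linear_combination_mono_on:
  fixes \<phi> \<psi> :: "real \<Rightarrow> real"
  assumes mono: "mono_on {a..b} \<phi>" "mono_on {a..b} \<psi>" and t: "t \<in> {a..b}"
  shows "jump_part a b (\<lambda>x. c * \<phi> x + d * \<psi> x) t = c * jump_part a b \<phi> t + d * jump_part a b \<psi> t"
proof -
  have sub: "{a..<t} \<subseteq> {a..<b}" using t by auto
  have summable: "right_jump b \<phi> summable_on {a..<t}" "right_jump b \<psi> summable_on {a..<t}"
    using t by (auto intro!: summable_on_subset[OF right_jump_summable_on_mono_on sub] mono)
  have "jump_part a b (\<lambda>x. c * \<phi> x + d * \<psi> x) t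
      = infsum (\<lambda>m. c * right_jump b \<phi> m + d * right_jump b \<psi> m) {a..<t}"
    unfolding jump_part_def using sub
    by (intro infsum_cong right_jump_linear_combination right_lim_mono_on(2)[OF mono(1)]
        right_lim_mono_on(2)[OF mono(2)]) auto
  also have "\<dots> = c * jump_part a b \<phi> t + d * jump_part a b \<psi> t"
    unfolding jump_part_def using summable
    by (simp add: infsum_add summable_on_cmult_right infsum_cmult_right)
  finally show ?thesis .
qed

lemma cont_part_linear_combination_mono_on:
  fixes \<phi> \<psi> :: "real \<Rightarrow> real"
  assumes "mono_on {a..b} \<phi>" "mono_on {a..b} \<psi>" and "t \<in> {a..b}"
  shows "cont_part a b (\<lambda>x. c * \<phi> x + d * \<psi> x) t = c * cont_part a b \<phi> t + d * cont_part a b \<psi> t"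
  using jump_part_linear_combination_mono_on[OF assms]
  by (simp add: cont_part_def algebra_simps)

lemma mono_on_rel_lipschitz_combination:
  fixes u v :: "real \<Rightarrow> real"
  assumes "mono_on {a..b} v" and "rel_lipschitz a b u v H" and "\<bar>c\<bar> \<le> 1"
  shows "mono_on {a..b} (\<lambda>x. H * v x + c * u x)"
proof (rule mono_onI)
  fix s t assume "s \<in> {a..b}" "t \<in> {a..b}" "s \<le> t"
  moreover from this have "\<bar>u t - u s\<bar> \<le> H * \<bar>v t - v s\<bar>"
    using assms(2) by (simp add: rel_lipschitz_def)
  ultimately have lip: "\<bar>u t - u s\<bar> \<le> H * (v t - v s)"
    using mono_onD[OF assms(1)] by simp
  have "c * (u s - u t) \<le> \<bar>c\<bar> * \<bar>u t - u s\<bar>"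
    by (metis abs_ge_self abs_minus_commute abs_mult)
  also have "\<dots> \<le> \<bar>u t - u s\<bar>"
    using mult_right_mono[OF \<open>\<bar>c\<bar> \<le> 1\<close> abs_ge_zero] by simp
  finally show "H * v s + c * u s \<le> H * v t + c * u t"
    using lip by (simp add: algebra_simps)
qed

lemma rel_lipschitz_if_mono_on:
  fixes u v :: "real \<Rightarrow> real"
  assumes "mono_on {a..b} v"
    and "mono_on {a..b} (\<lambda>x. H * v x - u x)" and "mono_on {a..b} (\<lambda>x. H * v x + u x)"
  shows "rel_lipschitz a b u v H"
proof -
  have le: "\<bar>u t - u s\<bar> \<le> H * \<bar>v t - v s\<bar>" if "s \<in> {a..b}" "t \<in> {a..b}" "s \<le> t" for s t
    using mono_onD[OF assms(1) that] mono_onD[OF assms(2) that] mono_onD[OF assms(3) that]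
    by (simp add: abs_le_iff right_diff_distrib)
  show ?thesis
    unfolding rel_lipschitz_def by (metis le abs_minus_commute linear)
qed

lemma rel_lipschitz_transfer:
  fixes f g :: "real \<Rightarrow> real" and L :: "(real \<Rightarrow> real) \<Rightarrow> real \<Rightarrow> real"
  assumes g_mono: "mono_on {a..b} g" and f_lip: "rel_lipschitz a b f g H"
    and linear: "\<And>\<phi> \<psi> c d t. mono_on {a..b} \<phi> \<Longrightarrow> mono_on {a..b} \<psi> \<Longrightarrow> t \<in> {a..b} \<Longrightarrow>
        L (\<lambda>x. c * \<phi> x + d * \<psi> x) t = c * L \<phi> t + d * L \<psi> t"
    and preserves_mono: "\<And>\<phi>. mono_on {a..b} \<phi> \<Longrightarrow> mono_on {a..b} (L \<phi>)"
  shows "rel_lipschitz a b (L f) (L g) H"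
proof -
  define h where "h \<sigma> x = H * g x + \<sigma> * f x" for \<sigma> x
  have h_mono: "mono_on {a..b} (h \<sigma>)" if "\<bar>\<sigma>\<bar> \<le> 1" for \<sigma>
    unfolding h_def using mono_on_rel_lipschitz_combination[OF g_mono f_lip that] .
  have f_eq: "f = (\<lambda>x. 1/2 * h 1 x + (-1/2) * h (-1) x)"
    and Hg_eq: "(\<lambda>x. H * g x + 0 * g x) = (\<lambda>x. 1/2 * h 1 x + 1/2 * h (-1) x)"
    by (auto simp: h_def algebra_simps)
  have L_h: "H * L g t + \<sigma> * L f t = L (h \<sigma>) t"
    if "t \<in> {a..b}" "\<sigma> = 1 \<or> \<sigma> = -1" for t \<sigma>
  proof -
    have "L f t = 1/2 * L (h 1) t - 1/2 * L (h (-1)) t"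
      by (subst f_eq, subst linear[OF h_mono h_mono \<open>t \<in> {a..b}\<close>]) auto
    moreover have "H * L g t = 1/2 * L (h 1) t + 1/2 * L (h (-1)) t"
      using linear[OF g_mono g_mono that(1), of H 0] Hg_eq
        linear[OF h_mono h_mono that(1), of 1 "-1" "1/2" "1/2"] by simp
    ultimately show ?thesis using that(2) by auto
  qed
  have "mono_on {a..b} (\<lambda>x. H * L g x + \<sigma> * L f x)" if "\<sigma> = 1 \<or> \<sigma> = -1" for \<sigma>
  proof (rule mono_onI)
    fix s t assume "s \<in> {a..b}" "t \<in> {a..b}" "s \<le> t"
    then show "H * L g s + \<sigma> * L f s \<le> H * L g t + \<sigma> * L f t"
      using mono_onD[OF preserves_mono[OF h_mono]] L_h that by auto
  qed
  from preserves_mono[OF g_mono] this[of "-1"] this[of 1] show ?thesis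
    by (intro rel_lipschitz_if_mono_on) simp_all
qed

theorem mainTheorem4:
  fixes a b H :: real and f g :: "real \<Rightarrow> real"
  assumes g_mono: "mono_on {a..b} g"
    and g_leftcont: "\<forall>t\<in>{a<..<b}. (g \<longlongrightarrow> g t) (at_left t)"
    and f_lip: "rel_lipschitz a b f g H"
  shows "rel_lipschitz a b (jump_part a b f) (jump_part a b g) H \<and>
         (mono_on {a..b} f \<longrightarrow>
           rel_lipschitz a b (cont_part a b f) (cont_part a b g) H)"
  using rel_lipschitz_transfer[of a b g f H "jump_part a b", OF g_mono f_lip
      jump_part_linear_combination_mono_on mono_on_jump_part]
    rel_lipschitz_transfer[of a b g f H "cont_part a b", OF g_mono f_lip
      cont_part_linear_combination_mono_on mono_on_cont_part]
  by blast

end
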